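(* Let $p\ge1$, let $\bm A\in\mathbb{R}^{m\times d}$, $\bm B\in\mathbb{R}^{n\times d}$ and $\bm V\in\mathbb{R}^{d\times k}$. Then \[d^p_{\mathrm{ERP}}(\bm A\bm V,\bm B\bm V)\le d^p_{\mathrm{ERP}}(\bm A,\bm B)\,\|\bm V\|_p.\] Moreover, if $\bm A,\bm B$ are sequences of one-hot vectors, then \[d^p_{\mathrm{ERP}}(\bm A\bm V,\bm B\bm V)\le d_{\mathrm{Lev}}(\bm A,\bm B)\cdot M(\bm V),\qquad M(\bm V)=\max\Big\{\max_{i\in\{1,\dots,d\}}\|\bm v_i\|_p,\ \max_{i,j\in\{1,\dots,d\}}\|\bm v_i-\bm v_j\|_p\Big\},\] where $\bm v_i$ is the $i$-th row of $\bm V$.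
   Context: $\bm A\bm V$ is the sequence with rows $\bm a_i\bm V$ (row vector times matrix), and $\|\bm V\|_p$ is the operator norm of $\bm x\mapsto\bm x\bm V$ induced by the $\ell_p$ norm. The ERP distance is defined recursively: $d^p_{\mathrm{ERP}}(\bm A,\emptyset)=\sum_{i}\|\bm a_i\|_p$, $d^p_{\mathrm{ERP}}(\emptyset,\bm B)=\sum_{i}\|\bm b_i\|_p$, and otherwise $d^p_{\mathrm{ERP}}(\bm A,\bm B)=\min\{\|\bm a_1\|_p+d^p_{\mathrm{ERP}}(\bm A_{2:},\bm B),\ \|\bm b_1\|_p+d^p_{\mathrm{ERP}}(\bm A,\bm B_{2:}),\ \|\bm a_1-\bm b_1\|_p+d^p_{\mathrm{ERP}}(\bm A_{2:},\bm B_{2:})\}$ ($\emptyset$ the empty sequence, $\bm A_{2:}$ removes the first row). One-hot vectors are vectors in $\{0,1\}^d$ with exactly one entry equal to $1$; $d_{\mathrm{Lev}}$ is the Levenshtein distance (minimum number of single-element insertions, deletions and substitutions). *)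

theory Defs
  imports "HOL-Analysis.Analysis"
begin

text \<open>Vectors in R^d are \<open>real ^ 'd\<close>; a d x k matrix is \<open>real ^ 'k ^ 'd\<close>,
  whose i-th row is \<open>V $ i\<close>. A sequence (matrix with m rows) is a list of row vectors.\<close>

definition lp_norm :: "real \<Rightarrow> real ^ 'n \<Rightarrow> real" where
  "lp_norm p x = (\<Sum>i\<in>UNIV. \<bar>x $ i\<bar> powr p) powr (1 / p)"

definition op_norm_p :: "real \<Rightarrow> real ^ 'k ^ 'd \<Rightarrow> real" where
  "op_norm_p p V = Sup {lp_norm p (x v* V) | x :: real ^ 'd. lp_norm p x \<le> 1}"

definition seq_mult :: "(real ^ 'd) list \<Rightarrow> real ^ 'k ^ 'd \<Rightarrow> (real ^ 'k) list" where
  "seq_mult A V = map (\<lambda>a. a v* V) A"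

function erp :: "real \<Rightarrow> (real ^ 'n) list \<Rightarrow> (real ^ 'n) list \<Rightarrow> real" where
  "erp p [] bs = (\<Sum>b\<leftarrow>bs. lp_norm p b)"
| "erp p (a # as) [] = (\<Sum>x\<leftarrow>a # as. lp_norm p x)"
| "erp p (a # as) (b # bs) =
     min (lp_norm p a + erp p as (b # bs))
       (min (lp_norm p b + erp p (a # as) bs)
            (lp_norm p (a - b) + erp p as bs))"
  by pat_completeness auto
termination by (relation "Wellfounded.measure (\<lambda>(p, as, bs). length as + length bs)") auto

function lev :: "'a list \<Rightarrow> 'a list \<Rightarrow> nat" where
  "lev [] bs = length bs"
| "lev (a # as) [] = length (a # as)"
| "lev (a # as) (b # bs) =
     min (1 + lev as (b # bs))
       (min (1 + lev (a # as) bs)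
            ((if a = b then 0 else 1) + lev as bs))"
  by pat_completeness auto
termination by (relation "Wellfounded.measure (\<lambda>(as, bs). length as + length bs)") auto

definition one_hot :: "real ^ 'n \<Rightarrow> bool" where
  "one_hot x \<longleftrightarrow> (\<forall>i. x $ i \<in> {0, 1}) \<and> card {i. x $ i = 1} = 1"

definition M_const :: "real \<Rightarrow> real ^ 'k ^ 'd \<Rightarrow> real" where
  "M_const p V = max (Max {lp_norm p (V $ i) | i. True})
                     (Max {lp_norm p (V $ i - V $ j) | i j. True})"

end

theory Submission
  imports Defs
begin

text \<open>ERP and Levenshtein distance obey the same three-branch recursion, with branch costs
  \<open>\<parallel>a\<parallel>\<^sub>p\<close>, \<open>\<parallel>b\<parallel>\<^sub>p\<close>, \<open>\<parallel>a - b\<parallel>\<^sub>p\<close> for ERP and \<open>1\<close>, \<open>1\<close>, \<open>[a \<noteq> b]\<close> for Levenshtein. Hence any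
  map \<open>f\<close> that bounds each cost of the transformed sequences by a constant multiple of the
  corresponding cost of the original ones bounds the whole distance, by induction along the
  recursion. For \<open>x \<mapsto> x V\<close> the multiple is \<open>\<parallel>V\<parallel>\<^sub>p\<close> by definition of the operator norm;
  on one-hot vectors \<open>x V\<close> is a row of \<open>V\<close>, so every ERP cost is at most \<open>M(V)\<close> and the
  substitution cost vanishes when the two one-hot vectors coincide.\<close>

lemma lp_norm_nonneg: "0 \<le> lp_norm p x"
  unfolding lp_norm_def by simp

lemma lp_norm_zero [simp]: "lp_norm p 0 = 0"
  unfolding lp_norm_def by simp

lemma lp_norm_eq_0_iff:
  assumes "p > 0"
  shows "lp_norm p x = 0 \<longleftrightarrow> x = 0"
proof
  assume "lp_norm p x = 0"
  then have "(\<Sum>i\<in>UNIV. \<bar>x $ i\<bar> powr p) = 0"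
    unfolding lp_norm_def by simp
  then have "\<forall>i. \<bar>x $ i\<bar> powr p = 0"
    by (subst (asm) sum_nonneg_eq_0_iff) auto
  then show "x = 0"
    by (simp add: vec_eq_iff)
qed simp

lemma lp_norm_scaleR:
  assumes "p > 0"
  shows "lp_norm p (c *\<^sub>R x) = \<bar>c\<bar> * lp_norm p x"
proof -
  have "(\<Sum>i\<in>UNIV. \<bar>(c *\<^sub>R x) $ i\<bar> powr p) = \<bar>c\<bar> powr p * (\<Sum>i\<in>UNIV. \<bar>x $ i\<bar> powr p)"
    by (simp add: sum_distrib_left abs_mult powr_mult)
  moreover have "(\<bar>c\<bar> powr p) powr (1 / p) = \<bar>c\<bar>"
    using assms by (simp add: powr_powr)
  ultimately show ?thesis
    unfolding lp_norm_def by (simp add: powr_mult)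
qed

lemma abs_component_le_lp_norm:
  assumes "p > 0"
  shows "\<bar>x $ i\<bar> \<le> lp_norm p x"
proof -
  have "\<bar>x $ i\<bar> powr p \<le> (\<Sum>j\<in>UNIV. \<bar>x $ j\<bar> powr p)"
    by (rule member_le_sum) auto
  then have "(\<bar>x $ i\<bar> powr p) powr (1 / p) \<le> lp_norm p x"
    unfolding lp_norm_def using assms by (intro powr_mono2) auto
  then show ?thesis
    using assms by (simp add: powr_powr)
qed

lemma lp_norm_le_of_abs_components_le:
  fixes y :: "real ^ 'n"
  assumes "p > 0" and "\<And>j. \<bar>y $ j\<bar> \<le> C"
  shows "lp_norm p y \<le> (real CARD('n) * C powr p) powr (1 / p)"
proof -
  have "(\<Sum>j\<in>UNIV. \<bar>y $ j\<bar> powr p) \<le> (\<Sum>j\<in>(UNIV :: 'n set). C powr p)"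
    using assms by (intro sum_mono powr_mono2) auto
  then show ?thesis
    unfolding lp_norm_def using assms by (intro powr_mono2) (auto intro: sum_nonneg)
qed

lemma bdd_above_op_norm_p:
  fixes V :: "real ^ 'k ^ 'd"
  assumes "p > 0"
  shows "bdd_above {lp_norm p (x v* V) | x :: real ^ 'd. lp_norm p x \<le> 1}"
proof -
  define C where "C = (\<Sum>i\<in>UNIV. \<Sum>j\<in>UNIV. \<bar>V $ i $ j\<bar>)"
  have "\<bar>(x v* V) $ j\<bar> \<le> C" if "lp_norm p x \<le> 1" for x :: "real ^ 'd" and j
  proof -
    have "\<bar>(x v* V) $ j\<bar> \<le> (\<Sum>i\<in>UNIV. \<bar>x $ i * V $ i $ j\<bar>)"
      unfolding vector_matrix_mult_def by simp
    also have "\<dots> \<le> (\<Sum>i\<in>UNIV. \<bar>V $ i $ j\<bar>)"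
    proof (rule sum_mono)
      fix i
      have "\<bar>x $ i\<bar> \<le> 1"
        using abs_component_le_lp_norm[OF assms, of x i] that by simp
      then show "\<bar>x $ i * V $ i $ j\<bar> \<le> \<bar>V $ i $ j\<bar>"
        by (simp add: abs_mult mult_left_le_one_le)
    qed
    also have "\<dots> \<le> (\<Sum>j'\<in>UNIV. \<Sum>i\<in>UNIV. \<bar>V $ i $ j'\<bar>)"
      by (rule member_le_sum) (auto intro: sum_nonneg)
    also have "\<dots> = C"
      unfolding C_def by (rule sum.swap)
    finally show ?thesis .
  qed
  then show ?thesis
    unfolding bdd_above_def using lp_norm_le_of_abs_components_le[OF assms] by blast
qed

lemma lp_norm_vector_matrix_mult_le:
  fixes V :: "real ^ 'k ^ 'd"
  assumes "p > 0"
  shows "lp_norm p (x v* V) \<le> lp_norm p x * op_norm_p p V"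
proof (cases "x = 0")
  case False
  define n where "n = lp_norm p x"
  have "n > 0"
    using False lp_norm_eq_0_iff[OF assms] lp_norm_nonneg[of p x] unfolding n_def
    by (metis less_eq_real_def)
  define y where "y = (1 / n) *\<^sub>R x"
  have "lp_norm p y = 1"
    unfolding y_def using lp_norm_scaleR[OF assms, of "1 / n" x] \<open>n > 0\<close> n_def by simp
  then have "lp_norm p (y v* V) \<le> op_norm_p p V"
    unfolding op_norm_p_def by (intro cSup_upper bdd_above_op_norm_p assms) auto
  moreover have "lp_norm p (y v* V) = lp_norm p (x v* V) / n"
    unfolding y_def scaleR_vector_matrix_assoc
    using lp_norm_scaleR[OF assms, of "1 / n" "x v* V"] \<open>n > 0\<close> by simp
  ultimately show ?thesis
    using \<open>n > 0\<close> unfolding n_def by (simp add: field_simps)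
qed simp

lemma op_norm_p_nonneg:
  fixes V :: "real ^ 'k ^ 'd"
  assumes "p > 0"
  shows "0 \<le> op_norm_p p V"
proof -
  have "lp_norm p ((0 :: real ^ 'd) v* V) \<le> op_norm_p p V"
    unfolding op_norm_p_def
    by (intro cSup_upper bdd_above_op_norm_p assms) (auto intro!: exI[of _ 0])
  then show ?thesis
    by simp
qed

text \<open>\<open>lev.induct\<close> is the two-list recursion scheme shared by \<open>erp\<close> and \<open>lev\<close>; unlike
  \<open>erp.induct\<close> it keeps the exponent \<open>p\<close> fixed.\<close>

lemma erp_map_le_mult:
  assumes "C \<ge> 0"
    and map_le: "\<And>x. lp_norm p (f x) \<le> lp_norm p x * C"
    and map_diff_le: "\<And>x y. lp_norm p (f x - f y) \<le> lp_norm p (x - y) * C"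
  shows "erp p (map f A) (map f B) \<le> erp p A B * C"
proof (induction A B rule: lev.induct)
  have sum_le: "(\<Sum>x\<leftarrow>map f xs. lp_norm p x) \<le> (\<Sum>x\<leftarrow>xs. lp_norm p x) * C" for xs
  proof -
    have "(\<Sum>x\<leftarrow>xs. lp_norm p (f x)) \<le> (\<Sum>x\<leftarrow>xs. lp_norm p x * C)"
      using map_le by (rule sum_list_mono)
    then show ?thesis
      by (simp add: sum_list_mult_const o_def)
  qed
  {
    case (1 bs)
    show ?case
      using sum_le[of bs] by simp
  next
    case (2 a as)
    show ?case
      using sum_le[of "a # as"] by simp
  next
    case (3 a as b bs)
    have "lp_norm p (f a) + erp p (map f as) (map f (b # bs))
        \<le> (lp_norm p a + erp p as (b # bs)) * C"
      using map_le[of a] 3(1) by (simp add: algebra_simps)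
    moreover have "lp_norm p (f b) + erp p (map f (a # as)) (map f bs)
        \<le> (lp_norm p b + erp p (a # as) bs) * C"
      using map_le[of b] 3(2) by (simp add: algebra_simps)
    moreover have "lp_norm p (f a - f b) + erp p (map f as) (map f bs)
        \<le> (lp_norm p (a - b) + erp p as bs) * C"
      using map_diff_le[of a b] 3(3) by (simp add: algebra_simps)
    ultimately show ?case
      using \<open>C \<ge> 0\<close>
      by (simp only: list.map erp.simps min_mult_distrib_right if_True min.mono)
  }
qed

lemma erp_map_le_lev_mult:
  assumes "\<And>x. x \<in> set A \<union> set B \<Longrightarrow> lp_norm p (f x) \<le> M"
    and "\<And>x y. x \<in> set A \<Longrightarrow> y \<in> set B \<Longrightarrow> x \<noteq> y \<Longrightarrow> lp_norm p (f x - f y) \<le> M"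
  shows "erp p (map f A) (map f B) \<le> real (lev A B) * M"
  using assms
proof (induction A B rule: lev.induct)
  have sum_le: "(\<Sum>x\<leftarrow>map f xs. lp_norm p x) \<le> real (length xs) * M"
    if "\<And>x. x \<in> set xs \<Longrightarrow> lp_norm p (f x) \<le> M" for xs
    using sum_list_mono[of xs "\<lambda>x. lp_norm p (f x)" "\<lambda>_. M"] that
    by (simp add: sum_list_triv o_def)
  {
    case (1 bs)
    then show ?case
      using sum_le[of bs] by simp
  next
    case (2 a as)
    then show ?case
      using sum_le[of "a # as"] by simp
  next
    case (3 a as b bs)
    have "M \<ge> 0"
      using "3.prems"(1)[of a] lp_norm_nonneg[of p "f a"] by simp
    have "erp p (map f as) (map f (b # bs)) \<le> real (lev as (b # bs)) * M"
      by (rule "3.IH"(1)) (use "3.prems" in auto)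
    then have "lp_norm p (f a) + erp p (map f as) (map f (b # bs))
        \<le> real (1 + lev as (b # bs)) * M"
      using "3.prems"(1)[of a] by (simp add: algebra_simps)
    moreover have "erp p (map f (a # as)) (map f bs) \<le> real (lev (a # as) bs) * M"
      by (rule "3.IH"(2)) (use "3.prems" in auto)
    then have "lp_norm p (f b) + erp p (map f (a # as)) (map f bs)
        \<le> real (1 + lev (a # as) bs) * M"
      using "3.prems"(1)[of b] by (simp add: algebra_simps)
    moreover have "erp p (map f as) (map f bs) \<le> real (lev as bs) * M"
      by (rule "3.IH"(3)) (use "3.prems" in auto)
    then have "lp_norm p (f a - f b) + erp p (map f as) (map f bs)
        \<le> real ((if a = b then 0 else 1) + lev as bs) * M"
      using "3.prems"(2)[of a b] by (cases "a = b") (simp_all add: algebra_simps)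
    ultimately show ?case
      using \<open>M \<ge> 0\<close>
      by (simp only: list.map erp.simps lev.simps of_nat_min min_mult_distrib_right if_True min.mono)
  }
qed

lemma one_hot_imp_axis:
  assumes "one_hot a"
  obtains i where "a = axis i 1"
proof -
  from assms obtain i where i: "{j. a $ j = 1} = {i}"
    unfolding one_hot_def by (auto simp: card_1_singleton_iff)
  have "a $ j = (if j = i then 1 else 0)" for j
    using assms i unfolding one_hot_def by (cases "j = i") auto
  then have "a = axis i 1"
    by (simp add: vec_eq_iff axis_def)
  then show thesis
    by (rule that)
qed

lemma axis_one_vector_matrix_mult [simp]:
  fixes V :: "real ^ 'k ^ 'd"
  shows "axis i 1 v* V = V $ i"
  by (simp add: vec_eq_iff vector_matrix_mult_def axis_def if_distrib[of "\<lambda>x. x * _"] cong: if_cong)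

lemma lp_norm_row_le_M_const: "lp_norm p (V $ i) \<le> M_const p V"
proof -
  have "finite {lp_norm p (V $ i) | i. True}"
    by (simp add: full_SetCompr_eq)
  then show ?thesis
    unfolding M_const_def by (intro max.coboundedI1 Max_ge) auto
qed

lemma lp_norm_row_diff_le_M_const: "lp_norm p (V $ i - V $ j) \<le> M_const p V"
proof -
  have "{lp_norm p (V $ i - V $ j) | i j. True} = (\<lambda>(i, j). lp_norm p (V $ i - V $ j)) ` UNIV"
    by auto
  then have "finite {lp_norm p (V $ i - V $ j) | i j. True}"
    by simp
  then show ?thesis
    unfolding M_const_def by (intro max.coboundedI2 Max_ge) auto
qed

lemma erp_seq_mult_le_op_norm_p:
  fixes V :: "real ^ 'k ^ 'd"
  assumes "p > 0"
  shows "erp p (seq_mult A V) (seq_mult B V) \<le> erp p A B * op_norm_p p V"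
  unfolding seq_mult_def
proof (rule erp_map_le_mult)
  show "0 \<le> op_norm_p p V"
    using assms by (rule op_norm_p_nonneg)
  show "lp_norm p (x v* V) \<le> lp_norm p x * op_norm_p p V" for x
    using assms by (rule lp_norm_vector_matrix_mult_le)
  show "lp_norm p (x v* V - y v* V) \<le> lp_norm p (x - y) * op_norm_p p V" for x y
    using lp_norm_vector_matrix_mult_le[OF assms, of "x - y" V]
    by (simp add: vector_matrix_mult_diff_distrib)
qed

lemma erp_seq_mult_le_lev_M_const:
  fixes V :: "real ^ 'k ^ 'd"
  assumes "\<forall>a\<in>set A. one_hot a" and "\<forall>b\<in>set B. one_hot b"
  shows "erp p (seq_mult A V) (seq_mult B V) \<le> real (lev A B) * M_const p V"
  unfolding seq_mult_def
proof (rule erp_map_le_lev_mult)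
  have row: "\<exists>i. x v* V = V $ i" if "x \<in> set A \<union> set B" for x
  proof -
    have "one_hot x"
      using that assms by blast
    then obtain i where "x = axis i 1"
      by (rule one_hot_imp_axis)
    then show ?thesis
      by auto
  qed
  show "lp_norm p (x v* V) \<le> M_const p V" if x: "x \<in> set A \<union> set B" for x
  proof -
    obtain i where "x v* V = V $ i"
      using row[OF x] by blast
    then show ?thesis
      by (simp add: lp_norm_row_le_M_const)
  qed
  show "lp_norm p (x v* V - y v* V) \<le> M_const p V" if xy: "x \<in> set A" "y \<in> set B" for x y
  proof -
    obtain i j where "x v* V = V $ i" "y v* V = V $ j"
      using row[of x] row[of y] xy by blast
    then show ?thesis
      by (simp add: lp_norm_row_diff_le_M_const)
  qed
qed

theorem lemma4:
  fixes p :: real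
    and A B :: "(real ^ 'd) list"
    and V :: "real ^ 'k ^ 'd"
  assumes "p \<ge> 1"
  shows "erp p (seq_mult A V) (seq_mult B V) \<le> erp p A B * op_norm_p p V
         \<and> ((\<forall>a\<in>set A. one_hot a) \<and> (\<forall>b\<in>set B. one_hot b) \<longrightarrow>
            erp p (seq_mult A V) (seq_mult B V) \<le> real (lev A B) * M_const p V)"
  using assms by (simp add: erp_seq_mult_le_op_norm_p erp_seq_mult_le_lev_M_const)

end
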